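(* Let $(D,\tau,d,\Delta)$ be a TMO instance with optimal makespan $\mathrm{OPT}$ (with $t$ reachable from $s$). Then there exists a flow over time in $D$ with unit arc capacities and transit times $\tau$, with time horizon $\mathrm{OPT}+\Delta$ and value at least $d\cdot\Delta$.
   Context: TMO instance $(D,\tau,d,\Delta)$: directed graph $D=(V,A)$ with source $s$, sink $t$, travel times $\tau:A\to\mathbb{Z}_{\ge0}$, $d\in\mathbb{Z}_{\ge1}$ trains, headway $\Delta\in\mathbb{Z}_{\ge1}$. A train routing assigns to each train $i\in[d]$ an $s$-$t$-path $P_i$ and entry times $\lambda_i:P_i\to\mathbb{Z}_{\ge0}$; it is feasible if $\lambda_i(a)+\tau_a\le\lambda_i(a')$ for consecutive arcs $a,a'$ of $P_i$ and $|\lambda_i(a)-\lambda_{i'}(a)|\ge\Delta$ for $i\ne i'$, $a\in P_i\cap P_{i'}$; makespan $=\max_i\max_{a\in P_i}(\lambda_i(a)+\tau_a)$; $\mathrm{OPT}$ is the minimum makespan. A flow over time with unit capacities and time horizon $T$ (continuous-time model) consists of measurable inflow rate functions $f_a:\mathbb{R}\to[0,1]$, $a\in A$, with $f_a(\theta)=0$ for $\theta\notin[0,T-\tau_a)$, where flow entering $a$ at time $\theta$ leaves $a$ at time $\theta+\tau_a$, satisfying flow conservation without storage at every $v\notin\{s,t\}$: $\sum_{a\in\delta^-(v)}f_a(\theta-\tau_a)=\sum_{a\in\delta^+(v)}f_a(\theta)$ for almost all $\theta$. Its value is the net amount of flow arriving at $t$ by time $T$, $\sum_{a\in\delta^-(t)}\int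 f_a-\sum_{a\in\delta^+(t)}\int f_a$. *)

theory Defs
  imports "HOL-Analysis.Analysis"
begin

definition digraph :: "'v set \<Rightarrow> 'a set \<Rightarrow> ('a \<Rightarrow> 'v) \<Rightarrow> ('a \<Rightarrow> 'v) \<Rightarrow> bool" where
  "digraph V A tail head \<longleftrightarrow> finite V \<and> finite A \<and> (\<forall>a\<in>A. tail a \<in> V \<and> head a \<in> V)"

definition is_st_path :: "'a set \<Rightarrow> ('a \<Rightarrow> 'v) \<Rightarrow> ('a \<Rightarrow> 'v) \<Rightarrow> 'v \<Rightarrow> 'v \<Rightarrow> 'a list \<Rightarrow> bool" where
  "is_st_path A tail head s t p \<longleftrightarrow>
     p \<noteq> [] \<and> set p \<subseteq> A \<and> tail (p ! 0) = s \<and> head (last p) = t \<and>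
     (\<forall>j. Suc j < length p \<longrightarrow> head (p ! j) = tail (p ! Suc j)) \<and>
     distinct (map tail p @ [t])"

definition tmo_instance :: "'v set \<Rightarrow> 'a set \<Rightarrow> ('a \<Rightarrow> 'v) \<Rightarrow> ('a \<Rightarrow> 'v) \<Rightarrow> 'v \<Rightarrow> 'v
    \<Rightarrow> nat \<Rightarrow> nat \<Rightarrow> bool" where
  "tmo_instance V A tail head s t d Delta \<longleftrightarrow>
     digraph V A tail head \<and> s \<in> V \<and> t \<in> V \<and> s \<noteq> t \<and> d \<ge> 1 \<and> Delta \<ge> 1"

text \<open>A train routing: train i < d uses path P i with entry times lam i (a) for a in P i.
Feasibility as in the paper.\<close>

definition feasible_routing :: "'a set \<Rightarrow> ('a \<Rightarrow> 'v) \<Rightarrow> ('a \<Rightarrow> 'v) \<Rightarrow> 'v \<Rightarrow> 'v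
    \<Rightarrow> ('a \<Rightarrow> nat) \<Rightarrow> nat \<Rightarrow> nat \<Rightarrow> (nat \<Rightarrow> 'a list) \<Rightarrow> (nat \<Rightarrow> 'a \<Rightarrow> nat) \<Rightarrow> bool" where
  "feasible_routing A tail head s t tau d Delta P lam \<longleftrightarrow>
     (\<forall>i<d. is_st_path A tail head s t (P i)) \<and>
     (\<forall>i<d. \<forall>j. Suc j < length (P i) \<longrightarrow>
          lam i (P i ! j) + tau (P i ! j) \<le> lam i (P i ! Suc j)) \<and>
     (\<forall>i<d. \<forall>i'<d. \<forall>a. i \<noteq> i' \<and> a \<in> set (P i) \<and> a \<in> set (P i') \<longrightarrow>
          \<bar>int (lam i a) - int (lam i' a)\<bar> \<ge> int Delta)"

definition makespan :: "('a \<Rightarrow> nat) \<Rightarrow> nat \<Rightarrow> (nat \<Rightarrow> 'a list) \<Rightarrow> (nat \<Rightarrow> 'a \<Rightarrow> nat) \<Rightarrow> nat" where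
  "makespan tau d P lam = Max {lam i a + tau a | i a. i < d \<and> a \<in> set (P i)}"

definition tmo_opt :: "'a set \<Rightarrow> ('a \<Rightarrow> 'v) \<Rightarrow> ('a \<Rightarrow> 'v) \<Rightarrow> 'v \<Rightarrow> 'v
    \<Rightarrow> ('a \<Rightarrow> nat) \<Rightarrow> nat \<Rightarrow> nat \<Rightarrow> nat" where
  "tmo_opt A tail head s t tau d Delta =
     (LEAST m. \<exists>P lam. feasible_routing A tail head s t tau d Delta P lam \<and> makespan tau d P lam = m)"

definition flow_over_time :: "'v set \<Rightarrow> 'a set \<Rightarrow> ('a \<Rightarrow> 'v) \<Rightarrow> ('a \<Rightarrow> 'v) \<Rightarrow> 'v \<Rightarrow> 'v
    \<Rightarrow> ('a \<Rightarrow> nat) \<Rightarrow> real \<Rightarrow> ('a \<Rightarrow> real \<Rightarrow> real) \<Rightarrow> bool" where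
  "flow_over_time V A tail head s t tau T f \<longleftrightarrow>
     (\<forall>a\<in>A. f a \<in> borel_measurable lebesgue) \<and>
     (\<forall>a\<in>A. \<forall>\<theta>. 0 \<le> f a \<theta> \<and> f a \<theta> \<le> 1) \<and>
     (\<forall>a\<in>A. \<forall>\<theta>. \<theta> \<notin> {0..<T - real (tau a)} \<longrightarrow> f a \<theta> = 0) \<and>
     (\<forall>v\<in>V - {s, t}. AE \<theta> in lebesgue.
        (\<Sum>a\<in>{a\<in>A. head a = v}. f a (\<theta> - real (tau a))) = (\<Sum>a\<in>{a\<in>A. tail a = v}. f a \<theta>))"

definition flow_value :: "'a set \<Rightarrow> ('a \<Rightarrow> 'v) \<Rightarrow> ('a \<Rightarrow> 'v) \<Rightarrow> 'v
    \<Rightarrow> ('a \<Rightarrow> real \<Rightarrow> real) \<Rightarrow> real" where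
  "flow_value A tail head t f =
     (\<Sum>a\<in>{a\<in>A. head a = t}. integral\<^sup>L lebesgue (f a)) - (\<Sum>a\<in>{a\<in>A. tail a = t}. integral\<^sup>L lebesgue (f a))"

end

theory Submission
  imports Defs "Graph_Theory.Shortest_Path" "Graph_Theory.Digraph_Component"
begin

text \<open>
  For a set X of arcs forming a static s-t flow and a potential p, sending flow along the
  s-t paths of a decomposition of X without waiting yields a flow over time with horizon
  p t - p s and value at least the sum over a in X of p (head a) - tau a - p (tail a),
  provided these windows are nonnegative on X (Ford and Fulkerson's temporally repeated
  flows). Choosing X to maximise T times its net inflow into t minus tau(X) leaves no
  negative cycle in its residual network, so shortest-path distances provide such a p with
  p t - p s = T whose windows are moreover nonpositive outside X. For T = OPT + Delta, every
  train i and every delay u < Delta of an optimal routing crosses some arc a at an integer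
  time inside the window of a; by the headway condition these d * Delta crossings are
  pairwise distinct, so the windows, and hence the flow value, add up to at least d * Delta.
\<close>

lemma (in pre_digraph) cas_sum_list_telescope:
  fixes g :: "'a \<Rightarrow> 'c::ab_group_add"
  shows "cas u p v \<Longrightarrow> (\<Sum>e\<leftarrow>p. g (head G e) - g (tail G e)) = g v - g u"
  by (induction p arbitrary: u) auto

lemma (in pre_digraph) cas_awalk_verts_nth:
  "cas u p v \<Longrightarrow> i \<le> length p \<Longrightarrow>
    awalk_verts u p ! i = (if i < length p then tail G (p ! i) else v)"
  by (induction p arbitrary: u i) (auto simp: nth_Cons split: nat.split)

lemma (in pre_digraph) cas_head_nth:
  "cas u p v \<Longrightarrow> i < length p \<Longrightarrow> head G (p ! i) = awalk_verts u p ! Suc i"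
proof (induction p arbitrary: u i)
  case (Cons e p)
  then show ?case by (cases i; cases p) (auto simp: nth_Cons)
qed simp

lemma (in wf_digraph) neg_closed_walk_imp_neg_closed_trail:
  fixes c :: "'b \<Rightarrow> 'c::linordered_ab_group_add"
  shows "awalk w C w \<Longrightarrow> (\<Sum>e\<leftarrow>C. c e) < 0 \<Longrightarrow>
    \<exists>w' C'. awalk w' C' w' \<and> distinct C' \<and> (\<Sum>e\<leftarrow>C'. c e) < 0"
proof (induction "length C" arbitrary: w C rule: less_induct)
  case less
  show ?case
  proof (cases "distinct (tl (awalk_verts w C))")
    case True
    then show ?thesis using less.prems distinct_tl_verts_imp_distinct by blast
  next
    case False
    then obtain e es where C: "C = e # es" by (cases C) auto
    with less.prems(1) have e: "e \<in> arcs G" "tail G e = w" and es: "awalk (head G e) es w"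
      by (auto simp: awalk_Cons_iff)
    have "\<not> distinct (awalk_verts (head G e) es)" using False C by simp
    then obtain q r s' y where es_decomp: "es = q @ r @ s'" "0 < length r"
      and walks: "awalk (head G e) q y" "awalk y r y" "awalk y s' w"
      using awalk_not_distinct_decomp[OF es] by blast
    have shortcut: "awalk w (e # q @ s') w" using e walks by (auto simp: awalk_Cons_iff)
    have shorter: "length r < length C" "length (e # q @ s') < length C"
      using C es_decomp by auto
    have "(\<Sum>e\<leftarrow>C. c e) = (\<Sum>e\<leftarrow>r. c e) + (\<Sum>e\<leftarrow>e # q @ s'. c e)"
      using C es_decomp by (simp add: algebra_simps)
    then have "(\<Sum>e\<leftarrow>r. c e) < 0 \<or> (\<Sum>e\<leftarrow>e # q @ s'. c e) < 0"
      using less.prems(2) by (metis add_nonneg_nonneg not_le)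
    then show ?thesis using less.hyps shorter walks(2) shortcut by blast
  qed
qed

lemma (in fin_digraph) no_neg_closed_walk_imp_potential:
  fixes c :: "'b \<Rightarrow> int"
  assumes no_neg: "\<And>w C. awalk w C w \<Longrightarrow> 0 \<le> (\<Sum>e\<leftarrow>C. c e)"
  shows "\<exists>\<pi>. \<forall>e\<in>arcs G. \<pi> (head G e) \<le> \<pi> (tail G e) + c e"
proof -
  define costs where "costs v = {\<Sum>e\<leftarrow>P. c e | P. \<exists>u. apath u P v}" for v
  have real_cost: "awalk_cost (\<lambda>e. real_of_int (c e)) P = of_int (\<Sum>e\<leftarrow>P. c e)" for P
    by (induction P) simp_all
  have finite_costs: "finite (costs v)" for v
  proof -
    have "{P. \<exists>u. apath u P v} \<subseteq> (\<lambda>(u, P, v). P) ` {(u, P, v). apath u P v}" by force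
    then have "finite {P. \<exists>u. apath u P v}"
      by (rule finite_subset) (rule finite_imageI[OF apaths_finite_triple])
    then show ?thesis unfolding costs_def by (simp add: setcompr_eq_image)
  qed
  have "Min (costs (head G e)) \<le> Min (costs (tail G e)) + c e" if e: "e \<in> arcs G" for e
  proof -
    have "[] \<in> {P. apath (tail G e) P (tail G e)}" using e by (simp add: apath_Nil_iff)
    then have "costs (tail G e) \<noteq> {}" by (auto simp: costs_def)
    then obtain u P where P: "apath u P (tail G e)" "Min (costs (tail G e)) = (\<Sum>e\<leftarrow>P. c e)"
      using Min_in[OF finite_costs] by (fastforce simp: costs_def)
    have walk: "awalk u (P @ [e]) (head G e)"
      using P(1) e by (auto simp: apath_def arc_implies_awalk)
    have "Min (costs (head G e)) \<le> (\<Sum>e\<leftarrow>awalk_to_apath (P @ [e]). c e)"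
      using apath_awalk_to_apath[OF walk] finite_costs by (auto simp: costs_def intro: Min_le)
    also have "\<dots> \<le> (\<Sum>e\<leftarrow>P @ [e]. c e)"
      using awalk_to_path_no_neg_cyc_cost[OF walk, of "\<lambda>e. real_of_int (c e)"] no_neg
      by (force simp: real_cost)
    finally show ?thesis using P(2) by simp
  qed
  then show ?thesis by (intro exI[of _ "\<lambda>v. Min (costs v)"]) blast
qed

lemma sum_filter_sum_nth_delta:
  assumes "finite S" "set xs \<subseteq> S"
  shows "(\<Sum>a\<in>{a\<in>S. P a}. \<Sum>j<length xs. if xs ! j = a then g j a else 0)
    = (\<Sum>j<length xs. if P (xs ! j) then g j (xs ! j) else 0)"
proof -
  have "(\<Sum>a\<in>{a\<in>S. P a}. \<Sum>j<length xs. if xs ! j = a then g j a else 0)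
      = (\<Sum>j<length xs. \<Sum>a\<in>{a\<in>S. P a}. if xs ! j = a then g j a else 0)"
    by (rule sum.swap)
  also have "\<dots> = (\<Sum>j<length xs. if P (xs ! j) then g j (xs ! j) else 0)"
    using assms by (intro sum.cong) (auto dest: nth_mem)
  finally show ?thesis .
qed

lemma sum_nth_delta_distinct:
  assumes "distinct xs" "i < length xs"
  shows "(\<Sum>j<length xs. if xs ! j = xs ! i then g j else 0) = g i"
  using assms by (simp add: nth_eq_iff_index_eq cong: if_cong)

datatype 'a res_arc = Fwd 'a | Bwd 'a | S_to_T | T_to_S

lemma sum_list_res_arc_lift:
  fixes g :: "'a \<Rightarrow> 'b::ab_group_add"
  shows "distinct C \<Longrightarrow> (\<Sum>e\<leftarrow>C. case_res_arc g (\<lambda>a. - g a) 0 0 e)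
    = sum g (Fwd -` set C) - sum g (Bwd -` set C)"
proof (induction C)
  case (Cons e C)
  have "finite (Fwd -` set C)" "finite (Bwd -` set C)"
    by (auto intro: finite_vimageI simp: inj_def)
  moreover have "Fwd -` set (e # C) = (case e of Fwd a \<Rightarrow> insert a (Fwd -` set C) | _ \<Rightarrow> Fwd -` set C)"
    "Bwd -` set (e # C) = (case e of Bwd a \<Rightarrow> insert a (Bwd -` set C) | _ \<Rightarrow> Bwd -` set C)"
    by (auto split: res_arc.split)
  ultimately show ?case using Cons by (cases e) auto
qed simp

lemma sum_augment_res_arcs:
  fixes g :: "'a \<Rightarrow> 'b::ab_group_add"
  assumes "finite X" "distinct C" "Fwd -` set C \<inter> X = {}" "Bwd -` set C \<subseteq> X"
  shows "sum g (X - Bwd -` set C \<union> Fwd -` set C) = sum g X + (\<Sum>e\<leftarrow>C. case_res_arc g (\<lambda>a. - g a) 0 0 e)"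
proof -
  have "finite (Fwd -` set C)" by (auto intro: finite_vimageI simp: inj_def)
  then have "sum g (X - Bwd -` set C \<union> Fwd -` set C) = sum g (X - Bwd -` set C) + sum g (Fwd -` set C)"
    using assms(1,3) by (intro sum.union_disjoint) auto
  also have "sum g (X - Bwd -` set C) = sum g X - sum g (Bwd -` set C)"
    using assms(1,4) by (intro sum_diff) (auto intro: finite_subset)
  finally show ?thesis using sum_list_res_arc_lift[OF assms(2), of g] by simp
qed

lemma makespan_ge:
  assumes "i < d" "a \<in> set (P i)"
  shows "lam i a + tau a \<le> makespan tau d P lam"
proof -
  have "{lam i a + tau a | i a. i < d \<and> a \<in> set (P i)}
      = (\<lambda>(i, a). lam i a + tau a) ` (SIGMA i:{..<d}. set (P i))"
    by auto
  then have "finite {lam i a + tau a | i a. i < d \<and> a \<in> set (P i)}" by simp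
  then show ?thesis unfolding makespan_def using assms by (intro Max_ge) auto
qed

locale st_network =
  fixes V :: "'v set" and A :: "'a set" and tail head :: "'a \<Rightarrow> 'v" and s t :: 'v
    and tau :: "'a \<Rightarrow> nat"
  assumes digraph: "Defs.digraph V A tail head" and s_in_V: "s \<in> V" and t_in_V: "t \<in> V"
    and s_ne_t: "s \<noteq> t"
begin

lemma finite_V: "finite V" and finite_A: "finite A"
  and tail_in_V: "a \<in> A \<Longrightarrow> tail a \<in> V" and head_in_V: "a \<in> A \<Longrightarrow> head a \<in> V"
  using digraph by (auto simp: Defs.digraph_def)

section \<open>Flows over time\<close>

lemma flow_over_time_integrable:
  assumes "flow_over_time V A tail head s t tau T f" "a \<in> A"
  shows "integrable lebesgue (f a)"
proof (rule Bochner_Integration.integrable_bound)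
  show "integrable lebesgue (indicat_real {0..T})"
    using lmeasurable_iff_integrable lmeasurable_interval(1) by blast
  show "f a \<in> borel_measurable lebesgue"
    using assms unfolding flow_over_time_def by blast
  have "norm (f a \<theta>) \<le> norm (indicat_real {0..T} \<theta>)" for \<theta>
    using assms unfolding flow_over_time_def by (cases "\<theta> \<in> {0..<T - real (tau a)}") auto
  then show "AE \<theta> in lebesgue. norm (f a \<theta>) \<le> norm (indicat_real {0..T} \<theta>)"
    by simp
qed

lemma flow_over_time_add_disjoint:
  assumes g: "flow_over_time V A tail head s t tau T g"
    and h: "flow_over_time V A tail head s t tau T h"
    and disjoint: "\<And>a. g a = (\<lambda>_. 0) \<or> h a = (\<lambda>_. 0)"
  shows "flow_over_time V A tail head s t tau T (\<lambda>a \<theta>. g a \<theta> + h a \<theta>)"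
    and "flow_value A tail head t (\<lambda>a \<theta>. g a \<theta> + h a \<theta>)
      = flow_value A tail head t g + flow_value A tail head t h"
proof -
  have "integral\<^sup>L lebesgue (\<lambda>\<theta>. g a \<theta> + h a \<theta>) = integral\<^sup>L lebesgue (g a) + integral\<^sup>L lebesgue (h a)"
    if "a \<in> A" for a
    using flow_over_time_integrable[OF g that] flow_over_time_integrable[OF h that] by simp
  then show "flow_value A tail head t (\<lambda>a \<theta>. g a \<theta> + h a \<theta>)
      = flow_value A tail head t g + flow_value A tail head t h"
    unfolding flow_value_def by (simp add: sum.distrib)
  have "AE \<theta> in lebesgue. (\<Sum>a\<in>{a\<in>A. head a = v}. g a (\<theta> - real (tau a)) + h a (\<theta> - real (tau a)))
      = (\<Sum>a\<in>{a\<in>A. tail a = v}. g a \<theta> + h a \<theta>)" if "v \<in> V - {s, t}" for v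
  proof -
    have "AE \<theta> in lebesgue.
        (\<Sum>a\<in>{a\<in>A. head a = v}. g a (\<theta> - real (tau a))) = (\<Sum>a\<in>{a\<in>A. tail a = v}. g a \<theta>)"
      "AE \<theta> in lebesgue.
        (\<Sum>a\<in>{a\<in>A. head a = v}. h a (\<theta> - real (tau a))) = (\<Sum>a\<in>{a\<in>A. tail a = v}. h a \<theta>)"
      using g h that unfolding flow_over_time_def by blast+
    then show ?thesis by eventually_elim (simp add: sum.distrib)
  qed
  moreover have "(\<lambda>\<theta>. g a \<theta> + h a \<theta>) \<in> borel_measurable lebesgue" if "a \<in> A" for a
    using g h that unfolding flow_over_time_def by (blast intro: borel_measurable_add)
  moreover have "0 \<le> g a \<theta> + h a \<theta>" "g a \<theta> + h a \<theta> \<le> 1" if "a \<in> A" for a \<theta>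
    using g h that disjoint[of a] unfolding flow_over_time_def by auto
  moreover have "g a \<theta> + h a \<theta> = 0" if "a \<in> A" "\<theta> \<notin> {0..<T - real (tau a)}" for a \<theta>
    using g h that unfolding flow_over_time_def by simp
  ultimately show "flow_over_time V A tail head s t tau T (\<lambda>a \<theta>. g a \<theta> + h a \<theta>)"
    unfolding flow_over_time_def by blast
qed

section \<open>Temporally repeated flow along a trail\<close>

definition arc_subgraph :: "'a set \<Rightarrow> ('v, 'a) pre_digraph" where
  "arc_subgraph X = \<lparr>verts = V, arcs = X, tail = tail, head = head\<rparr>"

lemma arc_subgraph_simps [simp]:
  "verts (arc_subgraph X) = V" "arcs (arc_subgraph X) = X"
  "pre_digraph.tail (arc_subgraph X) = tail" "pre_digraph.head (arc_subgraph X) = head"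
  by (simp_all add: arc_subgraph_def)

lemma wf_arc_subgraph: "X \<subseteq> A \<Longrightarrow> wf_digraph (arc_subgraph X)"
  by unfold_locales (auto simp: tail_in_V head_in_V)

abbreviation st_trail :: "'a list \<Rightarrow> bool" where
  "st_trail Q \<equiv> pre_digraph.trail (arc_subgraph A) s Q t"

lemma st_trailD:
  assumes "st_trail Q"
  shows "set Q \<subseteq> A" "distinct Q" "Q \<noteq> []"
  using assms s_ne_t by (auto simp: pre_digraph.trail_def pre_digraph.awalk_def pre_digraph.cas.simps)

lemma st_trail_sum_diff:
  fixes g :: "'v \<Rightarrow> int"
  assumes "st_trail Q"
  shows "(\<Sum>a\<in>set Q. g (head a) - g (tail a)) = g t - g s"
proof -
  interpret N: pre_digraph "arc_subgraph A" .
  have "N.cas s Q t" using assms by (simp add: N.trail_def N.awalk_def)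
  then show ?thesis
    using N.cas_sum_list_telescope[of s Q t g] st_trailD(2)[OF assms]
    by (simp add: sum_list_distinct_conv_sum_set)
qed

lemma st_trail_nodes:
  assumes "st_trail Q"
  obtains node where "node 0 = s" "node (length Q) = t"
    "\<And>j. j < length Q \<Longrightarrow> tail (Q ! j) = node j" "\<And>j. j < length Q \<Longrightarrow> head (Q ! j) = node (Suc j)"
proof -
  interpret N: pre_digraph "arc_subgraph A" .
  have cas: "N.cas s Q t" using assms by (simp add: N.trail_def N.awalk_def)
  show ?thesis
  proof (rule that[of "(!) (N.awalk_verts s Q)"])
    show "N.awalk_verts s Q ! 0 = s"
      using N.cas_awalk_verts_nth[OF cas, of 0] cas by (cases Q) auto
    show "N.awalk_verts s Q ! length Q = t"
      using N.cas_awalk_verts_nth[OF cas, of "length Q"] by simp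
    show "tail (Q ! j) = N.awalk_verts s Q ! j" if "j < length Q" for j
      using N.cas_awalk_verts_nth[OF cas, of j] that by simp
    show "head (Q ! j) = N.awalk_verts s Q ! Suc j" if "j < length Q" for j
      using N.cas_head_nth[OF cas that] by simp
  qed
qed

definition trail_entry :: "'a list \<Rightarrow> nat \<Rightarrow> real" where
  "trail_entry Q j = (\<Sum>k<j. real (tau (Q ! k)))"

text \<open>
  Flow entering Q at unit rate during [0, w) and travelling along Q without waiting. Summing
  over the positions j with Q ! j = a avoids an index function on arcs.
\<close>

definition trail_flow :: "'a list \<Rightarrow> real \<Rightarrow> 'a \<Rightarrow> real \<Rightarrow> real" where
  "trail_flow Q w a \<theta> =
    (\<Sum>j<length Q. if Q ! j = a then indicator {trail_entry Q j..<trail_entry Q j + w} \<theta> else 0)"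

lemma trail_entry_Suc: "trail_entry Q (Suc j) = trail_entry Q j + real (tau (Q ! j))"
  by (simp add: trail_entry_def)

lemma trail_entry_nonneg: "0 \<le> trail_entry Q j"
  by (simp add: trail_entry_def sum_nonneg)

lemma trail_entry_le:
  assumes "j \<le> length Q"
  shows "trail_entry Q j \<le> real (\<Sum>a\<leftarrow>Q. tau a)"
proof -
  have "trail_entry Q j \<le> trail_entry Q (length Q)"
    unfolding trail_entry_def using assms by (intro sum_mono2) auto
  also have "\<dots> = real (\<Sum>a\<leftarrow>Q. tau a)"
    by (simp add: trail_entry_def sum_list_sum_nth atLeast0LessThan)
  finally show ?thesis .
qed

lemma trail_flow_nth:
  "distinct Q \<Longrightarrow> i < length Q \<Longrightarrow>
    trail_flow Q w (Q ! i) = indicator {trail_entry Q i..<trail_entry Q i + w}"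
  by (simp add: trail_flow_def fun_eq_iff sum_nth_delta_distinct)

lemma trail_flow_notin: "a \<notin> set Q \<Longrightarrow> trail_flow Q w a = (\<lambda>_. 0)"
  by (auto simp: trail_flow_def fun_eq_iff intro!: sum.neutral)

lemma trail_flow_conservation:
  assumes Q: "st_trail Q" and v: "v \<noteq> s" "v \<noteq> t"
  shows "(\<Sum>a\<in>{a\<in>A. head a = v}. trail_flow Q w a (\<theta> - real (tau a)))
    = (\<Sum>a\<in>{a\<in>A. tail a = v}. trail_flow Q w a \<theta>)"
proof -
  obtain node where node: "node 0 = s" "node (length Q) = t"
    "\<And>j. j < length Q \<Longrightarrow> tail (Q ! j) = node j" "\<And>j. j < length Q \<Longrightarrow> head (Q ! j) = node (Suc j)"
    using st_trail_nodes[OF Q] by blast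
  define G :: "nat \<Rightarrow> real"
    where "G j = (if node j = v then indicator {trail_entry Q j..<trail_entry Q j + w} \<theta> else 0)" for j
  have shift: "indicator {trail_entry Q j..<trail_entry Q j + w} (\<theta> - real (tau (Q ! j)))
      = indicator {trail_entry Q (Suc j)..<trail_entry Q (Suc j) + w} \<theta>" for j
    by (simp add: indicator_def trail_entry_Suc algebra_simps)
  have "(\<Sum>a\<in>{a\<in>A. head a = v}. trail_flow Q w a (\<theta> - real (tau a))) = (\<Sum>j<length Q. G (Suc j))"
    unfolding trail_flow_def sum_filter_sum_nth_delta[OF finite_A st_trailD(1)[OF Q]]
    by (intro sum.cong) (simp_all add: G_def node shift)
  also have "\<dots> = (\<Sum>j<length Q. G j)"
    using sum_lessThan_telescope[of G "length Q"] v by (simp add: G_def node sum_subtractf)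
  also have "\<dots> = (\<Sum>a\<in>{a\<in>A. tail a = v}. trail_flow Q w a \<theta>)"
    unfolding trail_flow_def sum_filter_sum_nth_delta[OF finite_A st_trailD(1)[OF Q]]
    by (intro sum.cong) (simp_all add: G_def node)
  finally show ?thesis .
qed

lemma trail_flow_value:
  assumes Q: "st_trail Q" and w: "0 \<le> w"
  shows "flow_value A tail head t (trail_flow Q w) = w"
proof -
  obtain node where node: "node 0 = s" "node (length Q) = t"
    "\<And>j. j < length Q \<Longrightarrow> tail (Q ! j) = node j" "\<And>j. j < length Q \<Longrightarrow> head (Q ! j) = node (Suc j)"
    using st_trail_nodes[OF Q] by blast
  have integral: "integral\<^sup>L lebesgue (trail_flow Q w a) = (\<Sum>j<length Q. if Q ! j = a then w else 0)"
    for a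
  proof (cases "a \<in> set Q")
    case True
    then obtain i where i: "i < length Q" "a = Q ! i" by (auto simp: in_set_conv_nth)
    then show ?thesis
      using w trail_flow_nth[OF st_trailD(2)[OF Q] i(1)]
        sum_nth_delta_distinct[OF st_trailD(2)[OF Q] i(1), of "\<lambda>_. w"]
      by simp
  next
    case False
    then have "Q ! j \<noteq> a" if "j < length Q" for j using that by auto
    then show ?thesis using trail_flow_notin[OF False] by simp
  qed
  define F where "F j = (if node j = t then w else 0)" for j
  have "flow_value A tail head t (trail_flow Q w) = (\<Sum>j<length Q. F (Suc j) - F j)"
    unfolding flow_value_def integral sum_filter_sum_nth_delta[OF finite_A st_trailD(1)[OF Q]]
    by (simp add: sum_subtractf node F_def cong: if_cong)
  also have "\<dots> = w"
    unfolding sum_lessThan_telescope by (simp add: F_def node s_ne_t)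
  finally show ?thesis .
qed

lemma flow_over_time_trail_flow:
  assumes Q: "st_trail Q" and len: "real (\<Sum>a\<leftarrow>Q. tau a) \<le> T"
  shows "flow_over_time V A tail head s t tau T (trail_flow Q (T - real (\<Sum>a\<leftarrow>Q. tau a)))"
proof -
  let ?w = "T - real (\<Sum>a\<leftarrow>Q. tau a)"
  have "trail_flow Q ?w a \<in> borel_measurable lebesgue" for a
    unfolding trail_flow_def
  proof (intro borel_measurable_sum)
    show "(\<lambda>\<theta>. if Q ! j = a then indicator {trail_entry Q j..<trail_entry Q j + ?w} \<theta> else 0)
        \<in> borel_measurable lebesgue" for j
      by (cases "Q ! j = a") (auto intro: borel_measurable_indicator)
  qed
  moreover have "0 \<le> trail_flow Q ?w a \<theta> \<and> trail_flow Q ?w a \<theta> \<le> 1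
      \<and> (\<theta> \<notin> {0..<T - real (tau a)} \<longrightarrow> trail_flow Q ?w a \<theta> = 0)" for a \<theta>
  proof (cases "a \<in> set Q")
    case True
    then obtain i where i: "i < length Q" "a = Q ! i" by (auto simp: in_set_conv_nth)
    have "trail_entry Q i + ?w \<le> T - real (tau a)"
      using trail_entry_le[of "Suc i" Q] i trail_entry_Suc[of Q i] by simp
    then show ?thesis
      using i trail_flow_nth[OF st_trailD(2)[OF Q] i(1)] trail_entry_nonneg[of Q i]
      by (auto simp: indicator_def)
  qed (simp add: trail_flow_notin)
  ultimately show ?thesis
    unfolding flow_over_time_def using trail_flow_conservation[OF Q] by auto
qed

section \<open>Static flows\<close>

definition net_inflow :: "'a set \<Rightarrow> 'v \<Rightarrow> int" where
  "net_inflow X v = (\<Sum>a\<in>X. of_bool (head a = v) - of_bool (tail a = v))"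

definition static_flow :: "'a set \<Rightarrow> bool" where
  "static_flow X \<longleftrightarrow> X \<subseteq> A \<and> (\<forall>v. v \<noteq> s \<longrightarrow> v \<noteq> t \<longrightarrow> net_inflow X v = 0)"

text \<open>
  A potential p describes a cut over time: flow entering arc a at time \<theta> crosses it iff
  p (tail a) \<le> \<theta> and \<theta> + \<tau> a < p (head a). This is the length of that interval.
\<close>

definition cut_window :: "('v \<Rightarrow> int) \<Rightarrow> 'a \<Rightarrow> int" where
  "cut_window p a = p (head a) - int (tau a) - p (tail a)"

lemma static_flow_finite: "static_flow X \<Longrightarrow> finite X"
  using finite_A by (auto simp: static_flow_def intro: finite_subset)

lemma static_flow_sum_diff:
  fixes F :: "'v \<Rightarrow> int"
  assumes X: "static_flow X"
  shows "(\<Sum>a\<in>X. F (head a) - F (tail a)) = (F t - F s) * net_inflow X t"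
proof -
  have XA: "X \<subseteq> A" using X by (simp add: static_flow_def)
  have weighted: "(\<Sum>a\<in>X. G (head a) - G (tail a)) = (\<Sum>v\<in>V. G v * net_inflow X v)" for G :: "'v \<Rightarrow> int"
  proof -
    have "(\<Sum>v\<in>V. G v * net_inflow X v)
        = (\<Sum>a\<in>X. \<Sum>v\<in>V. G v * of_bool (head a = v) - G v * of_bool (tail a = v))"
      unfolding net_inflow_def sum_distrib_left right_diff_distrib by (rule sum.swap)
    also have "\<dots> = (\<Sum>a\<in>X. G (head a) - G (tail a))"
      using XA finite_V head_in_V tail_in_V by (intro sum.cong) (auto simp: sum_subtractf)
    finally show ?thesis by simp
  qed
  have at_s_t: "(\<Sum>v\<in>V. G v * net_inflow X v) = G s * net_inflow X s + G t * net_inflow X t"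
    for G :: "'v \<Rightarrow> int"
  proof -
    have "(\<Sum>v\<in>V. G v * net_inflow X v) = (\<Sum>v\<in>{s, t}. G v * net_inflow X v)"
      using X finite_V s_in_V t_in_V by (intro sum.mono_neutral_right) (auto simp: static_flow_def)
    then show ?thesis using s_ne_t by simp
  qed
  have "net_inflow X s = - net_inflow X t"
    using weighted[of "\<lambda>_. 1"] at_s_t[of "\<lambda>_. 1"] by simp
  then show ?thesis
    using weighted[of F] at_s_t[of F] by (simp add: algebra_simps)
qed

lemma static_flow_sum_cut_window:
  assumes "static_flow X"
  shows "(\<Sum>a\<in>X. cut_window p a) = (p t - p s) * net_inflow X t - (\<Sum>a\<in>X. int (tau a))"
  using static_flow_sum_diff[OF assms, of p] by (simp add: cut_window_def sum_subtractf)

lemma static_flow_has_st_trail: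
  assumes X: "static_flow X" and positive: "0 < net_inflow X t"
  shows "\<exists>Q. st_trail Q \<and> set Q \<subseteq> X"
proof -
  have XA: "X \<subseteq> A" using X by (simp add: static_flow_def)
  interpret G: wf_digraph "arc_subgraph X" using wf_arc_subgraph[OF XA] .
  define R where "R = {v. s \<rightarrow>\<^sup>*\<^bsub>arc_subgraph X\<^esub> v}"
  have s_in_R: "s \<in> R" using s_in_V by (simp add: R_def)
  have closed: "head a \<in> R" if "a \<in> X" "tail a \<in> R" for a
    using that G.in_arcs_imp_in_arcs_ends[of a] G.reachable_adj_trans by (fastforce simp: R_def)
  have "t \<in> R"
  proof (rule ccontr)
    assume "t \<notin> R"
    have "0 \<le> (\<Sum>a\<in>X. of_bool (head a \<in> R) - of_bool (tail a \<in> R) :: int)"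
      using closed by (intro sum_nonneg) auto
    also have "\<dots> = - net_inflow X t"
      using static_flow_sum_diff[OF X, of "\<lambda>v. of_bool (v \<in> R)"] s_in_R \<open>t \<notin> R\<close> by simp
    finally show False using positive by simp
  qed
  then obtain Q where Q: "G.apath s Q t" by (auto simp: R_def G.reachable_apath)
  then have "set Q \<subseteq> X" "distinct Q"
    by (auto simp: G.apath_def G.awalk_def intro: G.distinct_verts_imp_distinct)
  moreover have "pre_digraph.cas (arc_subgraph A) = G.cas"
    by (rule compatible_cas) (simp add: compatible_def)
  ultimately have "st_trail Q"
    using Q XA s_in_V by (auto simp: pre_digraph.trail_def pre_digraph.awalk_def G.apath_def)
  with \<open>set Q \<subseteq> X\<close> show ?thesis by blast
qed

lemma static_flow_Diff_st_trail:
  assumes X: "static_flow X" and Q: "st_trail Q" "set Q \<subseteq> X"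
  shows "static_flow (X - set Q)"
proof -
  have "net_inflow (set Q) v = of_bool (t = v) - of_bool (s = v)" for v
    using st_trail_sum_diff[OF Q(1), of "\<lambda>u. of_bool (u = v)"] by (simp add: net_inflow_def)
  moreover have "net_inflow (X - set Q) v = net_inflow X v - net_inflow (set Q) v" for v
    unfolding net_inflow_def using Q(2) static_flow_finite[OF X] by (simp add: sum_diff)
  ultimately show ?thesis using X by (auto simp: static_flow_def)
qed

lemma st_trail_cut_window_flow:
  assumes Q: "st_trail Q" and windows: "\<forall>a\<in>set Q. 0 \<le> cut_window p a"
  defines "h \<equiv> trail_flow Q (of_int (p t - p s) - real (\<Sum>a\<leftarrow>Q. tau a))"
  shows "flow_over_time V A tail head s t tau (of_int (p t - p s)) h"
    and "flow_value A tail head t h = of_int (\<Sum>a\<in>set Q. cut_window p a)"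
proof -
  have "(\<Sum>a\<in>set Q. cut_window p a) = p t - p s - int (\<Sum>a\<leftarrow>Q. tau a)"
    using st_trail_sum_diff[OF Q, of p] st_trailD(2)[OF Q]
    by (simp add: cut_window_def sum_subtractf sum_list_distinct_conv_sum_set)
  moreover have nonneg: "0 \<le> (\<Sum>a\<in>set Q. cut_window p a)"
    using windows by (intro sum_nonneg) auto
  ultimately have length: "real (\<Sum>a\<leftarrow>Q. tau a) \<le> of_int (p t - p s)"
    and width: "of_int (p t - p s) - real (\<Sum>a\<leftarrow>Q. tau a) = of_int (\<Sum>a\<in>set Q. cut_window p a)"
    by simp_all
  show "flow_over_time V A tail head s t tau (of_int (p t - p s)) h"
    unfolding h_def by (rule flow_over_time_trail_flow[OF Q length])
  show "flow_value A tail head t h = of_int (\<Sum>a\<in>set Q. cut_window p a)"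
    unfolding h_def width using nonneg by (intro trail_flow_value[OF Q]) (simp del: of_int_sum)
qed

lemma flow_over_time_of_static_flow:
  assumes X: "static_flow X" and p: "p s \<le> p t" and windows: "\<forall>a\<in>X. 0 \<le> cut_window p a"
  shows "\<exists>f. flow_over_time V A tail head s t tau (of_int (p t - p s)) f
    \<and> (\<forall>a. a \<notin> X \<longrightarrow> f a = (\<lambda>_. 0)) \<and> of_int (\<Sum>a\<in>X. cut_window p a) \<le> flow_value A tail head t f"
  using static_flow_finite[OF X] X windows
proof (induction X rule: finite_psubset_induct)
  case (psubset X)
  let ?T = "real_of_int (p t - p s)"
  show ?case
  proof (cases "0 < net_inflow X t")
    case False
    then have "(\<Sum>a\<in>X. cut_window p a) \<le> 0"
      using static_flow_sum_cut_window[OF psubset.prems(1), of p] p sum_nonneg[of X "\<lambda>a. int (tau a)"]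
        mult_nonneg_nonpos[of "p t - p s" "net_inflow X t"] by linarith
    then show ?thesis
      by (intro exI[of _ "\<lambda>_ _. 0"]) (simp add: flow_over_time_def flow_value_def del: of_int_sum)
  next
    case True
    obtain Q where Q: "st_trail Q" "set Q \<subseteq> X"
      using static_flow_has_st_trail[OF psubset.prems(1) True] by blast
    let ?h = "trail_flow Q (?T - real (\<Sum>a\<leftarrow>Q. tau a))"
    have h: "flow_over_time V A tail head s t tau ?T ?h"
      "flow_value A tail head t ?h = of_int (\<Sum>a\<in>set Q. cut_window p a)"
      using st_trail_cut_window_flow[OF Q(1)] Q(2) psubset.prems(2) by auto
    have "X - set Q \<subset> X" using Q st_trailD(3)[OF Q(1)] by (auto simp: neq_Nil_conv)
    moreover have "static_flow (X - set Q)" by (rule static_flow_Diff_st_trail[OF psubset.prems(1) Q])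
    moreover have "\<forall>a\<in>X - set Q. 0 \<le> cut_window p a" using psubset.prems(2) by blast
    ultimately obtain g where g: "flow_over_time V A tail head s t tau ?T g"
      "\<forall>a. a \<notin> X - set Q \<longrightarrow> g a = (\<lambda>_. 0)"
      "of_int (\<Sum>a\<in>X - set Q. cut_window p a) \<le> flow_value A tail head t g"
      using psubset.IH by blast
    have "g a = (\<lambda>_. 0) \<or> ?h a = (\<lambda>_. 0)" for a
      using g(2) trail_flow_notin[of a Q] by blast
    note sum = flow_over_time_add_disjoint[OF g(1) h(1) this]
    have "(\<Sum>a\<in>X. cut_window p a) = (\<Sum>a\<in>X - set Q. cut_window p a) + (\<Sum>a\<in>set Q. cut_window p a)"
      using psubset.hyps Q(2) by (simp add: sum.subset_diff)
    then have "of_int (\<Sum>a\<in>X. cut_window p a) \<le> flow_value A tail head t (\<lambda>a \<theta>. g a \<theta> + ?h a \<theta>)"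
      using g(3) h(2) sum(2) by (simp del: of_int_sum)
    moreover have "\<forall>a. a \<notin> X \<longrightarrow> (\<lambda>\<theta>. g a \<theta> + ?h a \<theta>) = (\<lambda>_. 0)"
    proof (intro allI impI)
      fix a assume "a \<notin> X"
      then have "g a = (\<lambda>_. 0)" "?h a = (\<lambda>_. 0)"
        using g(2) Q(2) by (auto intro: trail_flow_notin)
      then show "(\<lambda>\<theta>. g a \<theta> + ?h a \<theta>) = (\<lambda>_. 0)" by simp
    qed
    ultimately show ?thesis using sum(1) by blast
  qed
qed

section \<open>Tight cuts over time\<close>

text \<open>
  Ford and Fulkerson's objective: the value of the temporally repeated flow of X with
  horizon T.
\<close>

definition repeated_value :: "int \<Rightarrow> 'a set \<Rightarrow> int" where
  "repeated_value T X = T * net_inflow X t - (\<Sum>a\<in>X. int (tau a))"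

text \<open>
  Besides the residual arcs of X, an arc from s to t of cost T and one from t to s of
  cost -T: together they force p t - p s = T for every potential p.
\<close>

definition residual :: "'a set \<Rightarrow> ('v, 'a res_arc) pre_digraph" where
  "residual X = \<lparr>verts = V, arcs = Fwd ` (A - X) \<union> Bwd ` X \<union> {S_to_T, T_to_S},
     tail = case_res_arc tail head s t, head = case_res_arc head tail t s\<rparr>"

definition res_cost :: "int \<Rightarrow> 'a res_arc \<Rightarrow> int" where
  "res_cost T = case_res_arc (\<lambda>a. int (tau a)) (\<lambda>a. - int (tau a)) T (- T)"

lemma residual_simps [simp]:
  "verts (residual X) = V" "arcs (residual X) = Fwd ` (A - X) \<union> Bwd ` X \<union> {S_to_T, T_to_S}"
  "pre_digraph.tail (residual X) = case_res_arc tail head s t"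
  "pre_digraph.head (residual X) = case_res_arc head tail t s"
  by (simp_all add: residual_def)

lemma fin_digraph_residual: "X \<subseteq> A \<Longrightarrow> fin_digraph (residual X)"
  by unfold_locales
    (auto simp: finite_V s_in_V t_in_V tail_in_V head_in_V intro: finite_subset[OF _ finite_A])

lemma residual_augment:
  assumes X: "static_flow X" and C: "pre_digraph.awalk (residual X) w C w" "distinct C"
  defines "X' \<equiv> X - Bwd -` set C \<union> Fwd -` set C"
  shows "static_flow X'" and "repeated_value T X' = repeated_value T X - (\<Sum>e\<leftarrow>C. res_cost T e)"
proof -
  interpret R: pre_digraph "residual X" .
  define lift where "lift g = case_res_arc g (\<lambda>a. - g a) 0 0" for g :: "'a \<Rightarrow> int"
  define returns :: "'a res_arc \<Rightarrow> int" where "returns = case_res_arc (\<lambda>_. 0) (\<lambda>_. 0) 1 (-1)"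
  have "set C \<subseteq> arcs (residual X)" and cas: "R.cas w C w" using C(1) by (auto simp: R.awalk_def)
  then have F: "Fwd -` set C \<subseteq> A - X" and B: "Bwd -` set C \<subseteq> X" by auto
  have sum_X': "sum g X' = sum g X + (\<Sum>e\<leftarrow>C. lift g e)" for g
    unfolding X'_def lift_def using static_flow_finite[OF X] C(2) F B
    by (intro sum_augment_res_arcs) auto
  have balance: "of_bool (pre_digraph.head (residual X) e = v) - of_bool (pre_digraph.tail (residual X) e = v)
      = lift (\<lambda>a. of_bool (head a = v) - of_bool (tail a = v)) e
        + returns e * (of_bool (t = v) - of_bool (s = v))"
    for e v by (cases e) (simp_all add: lift_def returns_def)
  have inflow: "net_inflow X' v = net_inflow X v - (\<Sum>e\<leftarrow>C. returns e) * (of_bool (t = v) - of_bool (s = v))"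
    for v
  proof -
    have "(\<Sum>e\<leftarrow>C. of_bool (pre_digraph.head (residual X) e = v)
        - of_bool (pre_digraph.tail (residual X) e = v)) = (0 :: int)"
      using R.cas_sum_list_telescope[OF cas, of "\<lambda>u. of_bool (u = v)"] by simp
    then show ?thesis
      unfolding net_inflow_def sum_X' balance by (simp add: sum_list_addf sum_list_mult_const)
  qed
  moreover have "X' \<subseteq> A" using X F unfolding X'_def static_flow_def by auto
  ultimately show "static_flow X'" using X by (simp add: static_flow_def)
  have "res_cost T e = lift (\<lambda>a. int (tau a)) e + T * returns e" for e
    by (cases e) (simp_all add: res_cost_def lift_def returns_def)
  then have "(\<Sum>e\<leftarrow>C. res_cost T e) = (\<Sum>e\<leftarrow>C. lift (\<lambda>a. int (tau a)) e) + T * (\<Sum>e\<leftarrow>C. returns e)"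
    by (simp add: sum_list_addf sum_list_const_mult)
  moreover have "net_inflow X' t = net_inflow X t - (\<Sum>e\<leftarrow>C. returns e)"
    using inflow[of t] s_ne_t by simp
  ultimately show "repeated_value T X' = repeated_value T X - (\<Sum>e\<leftarrow>C. res_cost T e)"
    unfolding repeated_value_def sum_X' by (simp add: right_diff_distrib)
qed

lemma exists_max_static_flow:
  fixes f :: "'a set \<Rightarrow> 'b::linorder"
  obtains X where "static_flow X" "\<And>Y. static_flow Y \<Longrightarrow> f Y \<le> f X"
proof -
  have "{X. static_flow X} \<subseteq> Pow A" by (auto simp: static_flow_def)
  then have finite: "finite (f ` {X. static_flow X})"
    using finite_A by (simp add: finite_subset)
  have "static_flow {}" by (simp add: static_flow_def net_inflow_def)
  then have "Max (f ` {X. static_flow X}) \<in> f ` {X. static_flow X}"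
    using finite by (intro Max_in) auto
  then obtain X where "static_flow X" "f X = Max (f ` {X. static_flow X})" by auto
  with finite show ?thesis by (intro that) auto
qed

lemma exists_tight_cut:
  fixes T :: int
  shows "\<exists>X p. static_flow X \<and> p s = 0 \<and> p t = T
    \<and> (\<forall>a\<in>X. 0 \<le> cut_window p a) \<and> (\<forall>a\<in>A - X. cut_window p a \<le> 0)"
proof -
  obtain X where X: "static_flow X"
    and X_max: "\<And>Y. static_flow Y \<Longrightarrow> repeated_value T Y \<le> repeated_value T X"
    using exists_max_static_flow[of "repeated_value T"] by blast
  interpret R: fin_digraph "residual X"
    using fin_digraph_residual X by (simp add: static_flow_def)
  have "0 \<le> (\<Sum>e\<leftarrow>C. res_cost T e)" if walk: "R.awalk w C w" for w C
  proof (rule ccontr)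
    assume "\<not> 0 \<le> (\<Sum>e\<leftarrow>C. res_cost T e)"
    then obtain w' C' where C': "R.awalk w' C' w'" "distinct C'" "(\<Sum>e\<leftarrow>C'. res_cost T e) < 0"
      using R.neg_closed_walk_imp_neg_closed_trail[OF walk, of "res_cost T"] by force
    have "repeated_value T (X - Bwd -` set C' \<union> Fwd -` set C') \<le> repeated_value T X"
      using X_max residual_augment(1)[OF X C'(1,2)] .
    then show False using residual_augment(2)[OF X C'(1,2), of T] C'(3) by linarith
  qed
  then obtain \<pi> where \<pi>: "\<And>e. e \<in> arcs (residual X) \<Longrightarrow>
      \<pi> (pre_digraph.head (residual X) e) \<le> \<pi> (pre_digraph.tail (residual X) e) + res_cost T e"
    using R.no_neg_closed_walk_imp_potential[of "res_cost T"] by blast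
  define p where "p v = \<pi> v - \<pi> s" for v
  have "p s = 0" "p t = T"
    using \<pi>[of S_to_T] \<pi>[of T_to_S] by (simp_all add: p_def res_cost_def)
  moreover have "0 \<le> cut_window p a" if "a \<in> X" for a
  proof -
    have "\<pi> (tail a) \<le> \<pi> (head a) - int (tau a)" using \<pi>[of "Bwd a"] that by (simp add: res_cost_def)
    then show ?thesis by (simp add: p_def cut_window_def)
  qed
  moreover have "cut_window p a \<le> 0" if "a \<in> A - X" for a
  proof -
    have "\<pi> (head a) \<le> \<pi> (tail a) + int (tau a)" using \<pi>[of "Fwd a"] that by (simp add: res_cost_def)
    then show ?thesis by (simp add: p_def cut_window_def)
  qed
  ultimately show ?thesis using X by (intro exI[of _ X] exI[of _ p] conjI ballI) auto
qed

lemma sum_cut_window_complementary: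
  assumes "X \<subseteq> A" "\<forall>a\<in>X. 0 \<le> cut_window p a" "\<forall>a\<in>A - X. cut_window p a \<le> 0"
  shows "int (\<Sum>a\<in>A. nat (cut_window p a)) = (\<Sum>a\<in>X. cut_window p a)"
proof -
  have "int (\<Sum>a\<in>A. nat (cut_window p a)) = (\<Sum>a\<in>A. if a \<in> X then cut_window p a else 0)"
    unfolding of_nat_sum
  proof (intro sum.cong)
    show "int (nat (cut_window p a)) = (if a \<in> X then cut_window p a else 0)" if "a \<in> A" for a
      using assms(2,3) that by (cases "a \<in> X") auto
  qed simp
  also have "\<dots> = (\<Sum>a\<in>X. cut_window p a)"
    using assms(1) finite_A by (simp add: sum.If_cases Int_absorb1)
  finally show ?thesis .
qed

section \<open>Train routings cross every cut over time\<close>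

abbreviation st_path :: "'a list \<Rightarrow> bool" where
  "st_path Q \<equiv> is_st_path A tail head s t Q"

lemma feasible_routing_along_st_path:
  assumes q: "st_path q"
  shows "\<exists>P lam. feasible_routing A tail head s t tau d Delta P lam"
proof -
  have "distinct q" using q unfolding is_st_path_def by (metis distinct_append distinct_map)
  define pos where "pos a = (LEAST j. j < length q \<and> q ! j = a)" for a
  have pos: "pos (q ! j) = j" if "j < length q" for j
    unfolding pos_def using that \<open>distinct q\<close> nth_eq_iff_index_eq by (intro Least_equality) auto
  define lam where "lam i a = i * Delta + (\<Sum>k<pos a. tau (q ! k))" for i a
  have "feasible_routing A tail head s t tau d Delta (\<lambda>_. q) lam"
    unfolding feasible_routing_def
  proof (intro conjI allI impI)
    show "lam i (q ! j) + tau (q ! j) \<le> lam i (q ! Suc j)" if "Suc j < length q" for i j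
      using that by (simp add: lam_def pos)
    fix i i' a assume "i < d" "i' < d" "i \<noteq> i' \<and> a \<in> set q \<and> a \<in> set q"
    then have "1 \<le> \<bar>int i - int i'\<bar>" by linarith
    then have "int Delta \<le> \<bar>int i - int i'\<bar> * int Delta"
      using mult_right_mono[of 1 "\<bar>int i - int i'\<bar>" "int Delta"] by simp
    also have "\<dots> = \<bar>(int i - int i') * int Delta\<bar>" by (simp add: abs_mult)
    also have "\<dots> = \<bar>int (lam i a) - int (lam i' a)\<bar>" by (simp add: lam_def algebra_simps)
    finally show "int Delta \<le> \<bar>int (lam i a) - int (lam i' a)\<bar>" .
  qed (use q in auto)
  then show ?thesis by blast
qed

lemma tmo_opt_attained:
  assumes "st_path q"
  shows "\<exists>P lam. feasible_routing A tail head s t tau d Delta P lam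
    \<and> makespan tau d P lam = tmo_opt A tail head s t tau d Delta"
  unfolding tmo_opt_def
  by (rule LeastI_ex) (use feasible_routing_along_st_path[OF assms] in blast)

lemma st_path_crosses_cut:
  fixes lam :: "'a \<Rightarrow> int" and p :: "'v \<Rightarrow> int"
  assumes Q: "st_path Q"
    and consistent: "\<And>j. Suc j < length Q \<Longrightarrow> lam (Q ! j) + int (tau (Q ! j)) \<le> lam (Q ! Suc j)"
    and start: "p s \<le> lam (Q ! 0)" and finish: "lam (last Q) + int (tau (last Q)) < p t"
  shows "\<exists>a\<in>set Q. p (tail a) \<le> lam a \<and> lam a + int (tau a) < p (head a)"
proof (rule ccontr)
  assume "\<not> ?thesis"
  then have no_cross: "p (head a) \<le> lam a + int (tau a)" if "a \<in> set Q" "p (tail a) \<le> lam a" for a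
    using that by force
  have Q_ne: "Q \<noteq> []" and Q_0: "tail (Q ! 0) = s" and Q_last: "head (last Q) = t"
    and chain: "\<And>j. Suc j < length Q \<Longrightarrow> head (Q ! j) = tail (Q ! Suc j)"
    using Q by (auto simp: is_st_path_def)
  have late: "p (tail (Q ! j)) \<le> lam (Q ! j)" if "j < length Q" for j
    using that
  proof (induction j)
    case 0
    then show ?case using start Q_0 by simp
  next
    case (Suc j)
    then have "p (head (Q ! j)) \<le> lam (Q ! j) + int (tau (Q ! j))" using no_cross by simp
    then show ?case using chain[OF Suc.prems] consistent[OF Suc.prems] by simp
  qed
  have "p (head (last Q)) \<le> lam (last Q) + int (tau (last Q))"
    using no_cross late[of "length Q - 1"] Q_ne by (simp add: last_conv_nth)
  then show False using finish Q_last by simp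
qed

lemma feasible_routing_crosses_cut:
  assumes routing: "feasible_routing A tail head s t tau d Delta P lam"
    and p_s: "p s \<le> 0" and p_t: "int (makespan tau d P lam + Delta) \<le> p t"
    and i: "i < d" and u: "u < Delta"
  shows "\<exists>a\<in>set (P i). p (tail a) \<le> int (lam i a) + int u
    \<and> int (lam i a) + int u + int (tau a) < p (head a)"
proof -
  have Q: "st_path (P i)" using routing i by (simp add: feasible_routing_def)
  then have "last (P i) \<in> set (P i)" by (simp add: is_st_path_def)
  then have "lam i (last (P i)) + tau (last (P i)) \<le> makespan tau d P lam"
    by (rule makespan_ge[OF i])
  then have "int (lam i (last (P i))) + int u + int (tau (last (P i))) < p t"
    using p_t u by linarith
  moreover have "int (lam i (P i ! j)) + int u + int (tau (P i ! j)) \<le> int (lam i (P i ! Suc j)) + int u"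
    if "Suc j < length (P i)" for j
    using routing i that unfolding feasible_routing_def by fastforce
  ultimately show ?thesis
    using st_path_crosses_cut[OF Q, of "\<lambda>a. int (lam i a) + int u" p] p_s by fastforce
qed

lemma feasible_routing_crossing_unique:
  assumes routing: "feasible_routing A tail head s t tau d Delta P lam"
    and "i < d" "i' < d" "u < Delta" "u' < Delta" "a \<in> set (P i)" "a \<in> set (P i')"
    and same_time: "int (lam i a) + int u = int (lam i' a) + int u'"
  shows "i = i' \<and> u = u'"
proof (cases "i = i'")
  case False
  then have "int Delta \<le> \<bar>int (lam i a) - int (lam i' a)\<bar>"
    using routing assms(2-7) unfolding feasible_routing_def by blast
  then show ?thesis using same_time assms(4,5) by linarith
qed (use same_time in simp)

lemma trains_le_cut_windows:
  assumes routing: "feasible_routing A tail head s t tau d Delta P lam"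
    and p_s: "p s \<le> 0" and p_t: "int (makespan tau d P lam + Delta) \<le> p t"
  shows "d * Delta \<le> (\<Sum>a\<in>A. nat (cut_window p a))"
proof -
  let ?D = "{..<d} \<times> {..<Delta}"
  let ?W = "SIGMA a:A. {p (tail a)..<p (head a) - int (tau a)}"
  have crossings: "\<forall>x\<in>?D. \<exists>a. a \<in> set (P (fst x)) \<and> p (tail a) \<le> int (lam (fst x) a) + int (snd x)
      \<and> int (lam (fst x) a) + int (snd x) + int (tau a) < p (head a)"
    using feasible_routing_crosses_cut[OF routing p_s p_t] by fastforce
  obtain cross where cross: "\<forall>x\<in>?D. cross x \<in> set (P (fst x))
      \<and> p (tail (cross x)) \<le> int (lam (fst x) (cross x)) + int (snd x)
      \<and> int (lam (fst x) (cross x)) + int (snd x) + int (tau (cross x)) < p (head (cross x))"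
    using bchoice[OF crossings] by blast
  define crossing where "crossing x = (cross x, int (lam (fst x) (cross x)) + int (snd x))" for x
  have "crossing ` ?D \<subseteq> ?W"
  proof
    fix y assume "y \<in> crossing ` ?D"
    then obtain x where x: "x \<in> ?D" "y = crossing x" by blast
    have "fst x < d" using x(1) by auto
    then have "set (P (fst x)) \<subseteq> A"
      using routing by (simp add: feasible_routing_def is_st_path_def)
    then show "y \<in> ?W" using bspec[OF cross x(1)] x(2) by (auto simp: crossing_def)
  qed
  moreover have "inj_on crossing ?D"
  proof (rule inj_onI)
    fix x y assume x: "x \<in> ?D" and y: "y \<in> ?D" and same: "crossing x = crossing y"
    then have "cross x = cross y"
      and "int (lam (fst x) (cross x)) + int (snd x) = int (lam (fst y) (cross y)) + int (snd y)"
      unfolding crossing_def prod.inject by blast+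
    then show "x = y"
      using feasible_routing_crossing_unique[OF routing, of "fst x" "fst y" "snd x" "snd y" "cross x"]
        bspec[OF cross x] bspec[OF cross y] x y by (auto simp: prod_eq_iff)
  qed
  ultimately have "card ?D \<le> card ?W"
    using finite_A by (intro card_inj_on_le) auto
  also have "card ?W = (\<Sum>a\<in>A. nat (cut_window p a))"
    using finite_A by (simp add: card_SigmaI cut_window_def)
  finally show ?thesis by simp
qed

end

theorem mainTheorem6:
  fixes V :: "'v set" and A :: "'a set" and tail head :: "'a \<Rightarrow> 'v" and s t :: 'v
    and tau :: "'a \<Rightarrow> nat" and d Delta :: nat
  assumes "tmo_instance V A tail head s t d Delta"
    and "\<exists>p. is_st_path A tail head s t p"
  shows "\<exists>f. flow_over_time V A tail head s t tau (real (tmo_opt A tail head s t tau d Delta + Delta)) f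
             \<and> flow_value A tail head t f \<ge> real d * real Delta"
proof -
  interpret st_network V A tail head s t tau
    using assms(1) by unfold_locales (auto simp: tmo_instance_def)
  let ?T = "tmo_opt A tail head s t tau d Delta + Delta"
  obtain P lam where routing: "feasible_routing A tail head s t tau d Delta P lam"
    and optimal: "makespan tau d P lam = tmo_opt A tail head s t tau d Delta"
    using assms(2) tmo_opt_attained by blast
  obtain X p where X: "static_flow X" and p: "p s = 0" "p t = int ?T"
    and windows: "\<forall>a\<in>X. 0 \<le> cut_window p a" "\<forall>a\<in>A - X. cut_window p a \<le> 0"
    using exists_tight_cut[of "int ?T"] by blast
  have "d * Delta \<le> (\<Sum>a\<in>A. nat (cut_window p a))"
    by (rule trains_le_cut_windows[OF routing]) (simp_all add: p optimal)
  then have "int (d * Delta) \<le> int (\<Sum>a\<in>A. nat (cut_window p a))"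
    by (simp only: of_nat_le_iff)
  also have "\<dots> = (\<Sum>a\<in>X. cut_window p a)"
    by (rule sum_cut_window_complementary[OF _ windows]) (use X in \<open>simp add: static_flow_def\<close>)
  finally have "int (d * Delta) \<le> (\<Sum>a\<in>X. cut_window p a)" .
  moreover obtain f where "flow_over_time V A tail head s t tau (of_int (p t - p s)) f"
    and "of_int (\<Sum>a\<in>X. cut_window p a) \<le> flow_value A tail head t f"
    using flow_over_time_of_static_flow[OF X _ windows(1)] p by auto
  moreover have "of_int (p t - p s) = real ?T" using p by simp
  ultimately show ?thesis
    by (metis of_int_le_iff of_int_of_nat_eq of_nat_mult order_trans)
qed

end
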